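(* Fix integers $k,r\ge 1$ and $n\ge 0$, and let $\rho(k,r)$ be the density on the two-row shape $(n+1)^2=(n+1,n+1)$ given by $\rho_{1,j}=1$ for $1\le j\le n+1$, $\rho_{2,1}=r-1$, and $\rho_{2,j}=k-1$ for $2\le j\le n+1$. Then $$R_{k,r}(n)=\frac{r}{kn+r}\binom{kn+r}{n}=\bigl|\mathrm{SVT}((n+1)^2,\rho(k,r))\bigr|.$$
   Context: A density on a shape $\lambda$ is an assignment of a nonnegative integer $\rho_{i,j}$ to every cell $(i,j)$ (row $i$, column $j$); let $N=\sum\rho_{i,j}$. A standard set-valued Young tableau of shape $\lambda$ and density $\rho$ assigns to each cell $(i,j)$ a set $S_{i,j}$ with $|S_{i,j}|=\rho_{i,j}$, the sets partitioning $[N]$, such that every element of $S_{i,j}$ is smaller than every element of $S_{i,j+1}$ and of $S_{i+1,j}$ whenever those cells exist (conditions involving an empty set are vacuous). $\mathrm{SVT}(\lambda,\rho)$ is the set of these tableaux. *)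

theory Defs
  imports Complex_Main
begin

text \<open>A shape is a list of row lengths; cells are 1-indexed (row i, column j).\<close>
definition cells :: "nat list \<Rightarrow> (nat \<times> nat) set" where
  "cells lam = {(i, j). 1 \<le> i \<and> i \<le> length lam \<and> 1 \<le> j \<and> j \<le> lam ! (i - 1)}"

text \<open>Standard set-valued Young tableaux of shape lam and density rho
  (rho is only consulted on the cells of lam).  A tableau is a map from cells
  to sets of positive integers, empty outside the shape.\<close>
definition SVT :: "nat list \<Rightarrow> (nat \<times> nat \<Rightarrow> nat) \<Rightarrow> (nat \<times> nat \<Rightarrow> nat set) set" where
  "SVT lam rho = {S.
     (\<forall>c. c \<notin> cells lam \<longrightarrow> S c = {}) \<and>
     (\<forall>c\<in>cells lam. finite (S c) \<and> card (S c) = rho c) \<and>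
     (\<forall>c\<in>cells lam. \<forall>d\<in>cells lam. c \<noteq> d \<longrightarrow> S c \<inter> S d = {}) \<and>
     (\<Union>c\<in>cells lam. S c) = {1 .. (\<Sum>c\<in>cells lam. rho c)} \<and>
     (\<forall>i j. (i, j) \<in> cells lam \<and> (i, j + 1) \<in> cells lam \<longrightarrow>
        (\<forall>a\<in>S (i, j). \<forall>b\<in>S (i, j + 1). a < b)) \<and>
     (\<forall>i j. (i, j) \<in> cells lam \<and> (i + 1, j) \<in> cells lam \<longrightarrow>
        (\<forall>a\<in>S (i, j). \<forall>b\<in>S (i + 1, j). a < b))}"

definition rho_kr :: "nat \<Rightarrow> nat \<Rightarrow> nat \<times> nat \<Rightarrow> nat" where
  "rho_kr k r c = (if fst c = 1 then 1 else if snd c = 1 then r - 1 else k - 1)"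

definition raney :: "nat \<Rightarrow> nat \<Rightarrow> nat \<Rightarrow> real" where
  "raney k r n = real r / real (k * n + r) * real ((k * n + r) choose n)"

end

theory Submission
  imports Defs
begin

(*
  A tableau of shape (n+1,n+1) and density rho(k,r) is determined by the set A of the entries of
  its first row: the remaining numbers must fill the second row in increasing order, cut into
  consecutive blocks of sizes r-1, k-1, ..., k-1.  This filling is a tableau exactly when every
  initial segment {1..t} that contains u > 0 elements of A contains at most r-1 + (u-1)(k-1)
  other numbers, i.e. when the indicator word of A is a ballot word.  Ballot words with n further
  up-steps and c free places satisfy R(n, c) = R(n-1, c+k-1) + R(n, c-1), and so does the
  binomial difference C(kn+c, n) - k C(kn+c-1, n-1) = c/(kn+c) C(kn+c, n).
*)

section \<open>Raney numbers count ballot words\<close>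

fun raney_int :: "nat \<Rightarrow> nat \<Rightarrow> nat \<Rightarrow> int" where
  "raney_int k 0 r = 1"
| "raney_int k (Suc n) r =
     int ((k * Suc n + r) choose Suc n) - int k * int ((k * Suc n + r - 1) choose n)"

lemma raney_int_Suc_0:
  assumes "k \<ge> 1"
  shows "raney_int k (Suc n) 0 = 0"
proof -
  obtain m where m: "k * Suc n = Suc m"
    using assms by (cases "k * Suc n") auto
  have "Suc n * (Suc m choose Suc n) = Suc m * (m choose n)"
    by (rule Suc_times_binomial)
  also have "\<dots> = Suc n * (k * (m choose n))"
    using m by (metis mult.assoc mult.commute)
  finally have "Suc m choose Suc n = k * (m choose n)"
    by (metis mult_left_cancel nat.distinct(1))
  then show ?thesis
    using m by simp
qed

lemma raney_int_Suc_Suc: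
  assumes "k \<ge> 1"
  shows "raney_int k (Suc n) (Suc c) = raney_int k n (c + k) + raney_int k (Suc n) c"
proof -
  obtain m where m: "k * Suc n + c = Suc m"
    using assms by (cases "k * Suc n + c") auto
  have pascal: "int (Suc (Suc m) choose Suc n) = int (Suc m choose n) + int (Suc m choose Suc n)"
    by simp
  show ?thesis
  proof (cases n)
    case 0
    then show ?thesis
      using m by simp
  next
    case (Suc n')
    have "int (Suc m choose Suc n') = int (m choose n') + int (m choose Suc n')"
      by simp
    moreover have "k * Suc n' + (c + k) = Suc m" "k * Suc n + Suc c = Suc (Suc m)"
      using m Suc by (simp_all add: algebra_simps)
    ultimately show ?thesis
      using m Suc pascal by (simp del: binomial_Suc_Suc add: algebra_simps)
  qed
qed

lemma raney_eq_raney_int: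
  assumes "k \<ge> 1" "r \<ge> 1"
  shows "raney k r n = real_of_int (raney_int k n r)"
proof (cases n)
  case 0
  then show ?thesis using assms by (simp add: raney_def)
next
  case (Suc n')
  obtain m where m: "k * n + r = Suc m"
    using assms by (cases "k * n + r") auto
  have absorb: "real (Suc m choose Suc n') * real (Suc n') = real (Suc m) * real (m choose n')"
    using Suc_times_binomial_eq[of m n'] by (metis mult.commute of_nat_mult)
  have r: "real r = real (Suc m) - real k * real (Suc n')"
    using m Suc by (simp add: algebra_simps) (metis of_nat_add of_nat_mult add_diff_cancel_left' of_nat_Suc)
  have "real r * real (Suc m choose Suc n')
      = real (Suc m) * real (Suc m choose Suc n') - real k * (real (Suc m choose Suc n') * real (Suc n'))"
    by (simp del: binomial_Suc_Suc of_nat_Suc add: r algebra_simps)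
  also have "\<dots> = real (Suc m) * (real (Suc m choose Suc n') - real k * real (m choose n'))"
    using absorb by (simp del: binomial_Suc_Suc of_nat_Suc add: algebra_simps)
  finally have "raney k r n = real (Suc m choose Suc n') - real k * real (m choose n')"
    using m Suc by (simp add: raney_def field_simps del: of_nat_Suc)
  then show ?thesis
    using m Suc by simp
qed

lemma all_take_Cons_iff:
  "(\<forall>t. P (take t (x # xs))) \<longleftrightarrow> P [] \<and> (\<forall>t. P (x # take t xs))"
proof
  assume "\<forall>t. P (take t (x # xs))"
  then show "P [] \<and> (\<forall>t. P (x # take t xs))"
    by (metis take_0 take_Suc_Cons)
next
  assume *: "P [] \<and> (\<forall>t. P (x # take t xs))"
  show "\<forall>t. P (take t (x # xs))"
  proof
    fix t
    show "P (take t (x # xs))" using * by (cases t) auto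
  qed
qed

(* Throughout k = Suc kk and r = Suc r', which avoids truncated subtraction in rho_kr.  In a word
   of ballot_words kk n c there are n letters True; c counts the free places, each True opens kk
   more and each False fills one. *)
definition ballot_words :: "nat \<Rightarrow> nat \<Rightarrow> nat \<Rightarrow> bool list set" where
  "ballot_words kk n c = {w. count_list w True = n \<and> count_list w False = c + n * kk \<and>
     (\<forall>t. count_list (take t w) False \<le> c + count_list (take t w) True * kk)}"

lemma Nil_in_ballot_words_iff: "[] \<in> ballot_words kk n c \<longleftrightarrow> n = 0 \<and> c = 0"
  by (auto simp: ballot_words_def)

lemma Cons_True_in_ballot_words_iff:
  "True # w \<in> ballot_words kk n c \<longleftrightarrow> n > 0 \<and> w \<in> ballot_words kk (n - 1) (c + kk)"
proof -
  have "(\<forall>t. count_list (take t (True # w)) False \<le> c + count_list (take t (True # w)) True * kk)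
      \<longleftrightarrow> (\<forall>t. count_list (take t w) False \<le> (c + kk) + count_list (take t w) True * kk)"
    by (subst all_take_Cons_iff) (simp add: algebra_simps)
  then show ?thesis
    by (cases n) (auto simp: ballot_words_def algebra_simps)
qed

lemma Cons_False_in_ballot_words_iff:
  "False # w \<in> ballot_words kk n c \<longleftrightarrow> c > 0 \<and> w \<in> ballot_words kk n (c - 1)"
proof -
  have "(\<forall>t. count_list (take t (False # w)) False \<le> c + count_list (take t (False # w)) True * kk)
      \<longleftrightarrow> (\<forall>t. Suc (count_list (take t w) False) \<le> c + count_list (take t w) True * kk)"
    by (subst all_take_Cons_iff) simp
  then show ?thesis
    by (cases c) (auto simp: ballot_words_def dest: spec[of _ 0])
qed

lemma count_list_True_plus_False: "count_list w True + count_list w False = length w"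
  by (induction w) auto

lemma finite_ballot_words: "finite (ballot_words kk n c)"
proof (rule finite_subset)
  show "ballot_words kk n c \<subseteq> {w. set w \<subseteq> UNIV \<and> length w = n + (c + n * kk)}"
  proof
    fix w
    assume "w \<in> ballot_words kk n c"
    then show "w \<in> {w. set w \<subseteq> UNIV \<and> length w = n + (c + n * kk)}"
      using count_list_True_plus_False[of w] by (simp add: ballot_words_def)
  qed
qed (rule finite_lists_length_eq, simp)

lemma ballot_words_unfold:
  "ballot_words kk n c =
     (if n = 0 \<and> c = 0 then {[]} else {}) \<union>
     (if n > 0 then Cons True ` ballot_words kk (n - 1) (c + kk) else {}) \<union>
     (if c > 0 then Cons False ` ballot_words kk n (c - 1) else {})" (is "_ = ?R")
proof (rule set_eqI)
  fix w
  show "w \<in> ballot_words kk n c \<longleftrightarrow> w \<in> ?R"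
  proof (cases w)
    case Nil
    then show ?thesis by (auto simp: Nil_in_ballot_words_iff)
  next
    case (Cons b v)
    then show ?thesis
      by (cases b) (auto simp: Cons_True_in_ballot_words_iff Cons_False_in_ballot_words_iff)
  qed
qed

lemma card_ballot_words: "int (card (ballot_words kk n c)) = raney_int (Suc kk) n (Suc c)"
proof (induction n arbitrary: c)
  case 0
  show ?case
  proof (induction c)
    case 0
    then show ?case by (subst ballot_words_unfold) simp
  next
    case (Suc c)
    then show ?case by (subst ballot_words_unfold) (simp add: card_image)
  qed
next
  case (Suc n)
  note outer_IH = Suc.IH
  show ?case
  proof (induction c)
    case 0
    have "ballot_words kk (Suc n) 0 = Cons True ` ballot_words kk n kk"
      by (subst ballot_words_unfold) simp
    then show ?case
      using outer_IH[of kk] raney_int_Suc_Suc[of "Suc kk" n 0] raney_int_Suc_0[of "Suc kk" n]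
      by (simp add: card_image)
  next
    case (Suc c)
    have "ballot_words kk (Suc n) (Suc c)
        = Cons True ` ballot_words kk n (Suc c + kk) \<union> Cons False ` ballot_words kk (Suc n) c"
      by (subst ballot_words_unfold) simp
    moreover have "card (Cons True ` ballot_words kk n (Suc c + kk) \<union> Cons False ` ballot_words kk (Suc n) c)
        = card (ballot_words kk n (Suc c + kk)) + card (ballot_words kk (Suc n) c)"
      by (subst card_Un_disjoint) (auto simp: finite_ballot_words card_image)
    ultimately show ?case
      using Suc.IH outer_IH[of "Suc c + kk"] raney_int_Suc_Suc[of "Suc kk" n "Suc c"] by simp
  qed
qed

section \<open>First rows as ballot sets\<close>

fun row2_prefix_size :: "nat \<Rightarrow> nat \<Rightarrow> nat \<Rightarrow> nat" where
  "row2_prefix_size kk r' 0 = 0"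
| "row2_prefix_size kk r' (Suc u) = r' + u * kk"

lemma mono_row2_prefix_size: "mono (row2_prefix_size kk r')"
proof (rule monoI)
  fix u v :: nat
  assume "u \<le> v"
  then show "row2_prefix_size kk r' u \<le> row2_prefix_size kk r' v"
    by (cases u; cases v) auto
qed

definition tableau_size :: "nat \<Rightarrow> nat \<Rightarrow> nat \<Rightarrow> nat" where
  "tableau_size kk r' n = Suc n + r' + n * kk"

definition ballot_sets :: "nat \<Rightarrow> nat \<Rightarrow> nat \<Rightarrow> nat set set" where
  "ballot_sets kk r' n = {A. A \<subseteq> {1..tableau_size kk r' n} \<and> card A = Suc n \<and>
     (\<forall>t \<le> tableau_size kk r' n. card ({1..t} - A) \<le> row2_prefix_size kk r' (card (A \<inter> {1..t})))}"

definition indicator_word :: "nat \<Rightarrow> nat set \<Rightarrow> bool list" where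
  "indicator_word N A = map (\<lambda>x. x \<in> A) [1..<Suc N]"

lemma take_indicator_word: "take t (indicator_word N A) = indicator_word (min t N) A"
  by (cases "t \<le> N") (simp_all add: indicator_word_def take_map take_upt del: upt_Suc)

lemma count_indicator_word:
  "count_list (indicator_word N A) True = card (A \<inter> {1..N})"
  "count_list (indicator_word N A) False = card ({1..N} - A)"
proof -
  have "{x. x \<in> A} \<inter> {1..<Suc N} = A \<inter> {1..N}" "{x. x \<notin> A} \<inter> {1..<Suc N} = {1..N} - A"
    by auto
  then show "count_list (indicator_word N A) True = card (A \<inter> {1..N})"
    "count_list (indicator_word N A) False = card ({1..N} - A)"
    by (simp_all add: indicator_word_def count_list_eq_length_filter length_filter_map comp_def
        distinct_length_filter del: upt_Suc)
qed

lemma bij_betw_indicator_word: "bij_betw (indicator_word N) (Pow {1..N}) {w. length w = N}"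
proof (rule bij_betw_imageI)
  show "inj_on (indicator_word N) (Pow {1..N})"
  proof (rule inj_onI)
    fix A B
    assume "A \<in> Pow {1..N}" "B \<in> Pow {1..N}" "indicator_word N A = indicator_word N B"
    then show "A = B"
      by (auto simp: indicator_word_def map_eq_conv simp del: upt_Suc)
  qed
  show "indicator_word N ` Pow {1..N} = {w. length w = N}"
  proof
    show "{w. length w = N} \<subseteq> indicator_word N ` Pow {1..N}"
    proof
      fix w :: "bool list"
      assume "w \<in> {w. length w = N}"
      then have "indicator_word N {x \<in> {1..N}. w ! (x - 1)} = w"
        by (auto intro!: nth_equalityI simp: indicator_word_def simp del: upt_Suc)
      then show "w \<in> indicator_word N ` Pow {1..N}"
        by (metis (no_types, lifting) PowI image_eqI mem_Collect_eq subsetI)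
    qed
  qed (auto simp: indicator_word_def simp del: upt_Suc)
qed

lemma prefix_condition_indicator_word:
  "(\<forall>t \<le> N. card ({1..t} - A) \<le> f (card (A \<inter> {1..t}))) \<longleftrightarrow>
    (\<forall>t. count_list (take t (indicator_word N A)) False \<le> f (count_list (take t (indicator_word N A)) True))"
proof -
  have "(\<forall>t \<le> N. card ({1..t} - A) \<le> f (card (A \<inter> {1..t}))) \<longleftrightarrow>
      (\<forall>t \<le> N. count_list (indicator_word t A) False \<le> f (count_list (indicator_word t A) True))"
    by (simp add: count_indicator_word)
  also have "\<dots> \<longleftrightarrow> (\<forall>t. count_list (indicator_word (min t N) A) False
      \<le> f (count_list (indicator_word (min t N) A) True))"
    by (metis min.absorb1 min.cobounded2 nat_le_linear)
  finally show ?thesis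
    by (simp only: take_indicator_word)
qed

lemma in_ballot_sets_iff:
  assumes A: "A \<subseteq> {1..tableau_size kk r' n}"
  shows "A \<in> ballot_sets kk r' n \<longleftrightarrow>
    indicator_word (tableau_size kk r' n) A \<in> Cons True ` ballot_words kk n r'"
proof -
  define N where "N = tableau_size kk r' n"
  define P where "P u \<longleftrightarrow> count_list u False \<le> row2_prefix_size kk r' (count_list u True)" for u
  have mem: "A \<in> ballot_sets kk r' n \<longleftrightarrow>
      count_list (indicator_word N A) True = Suc n \<and> (\<forall>t. P (take t (indicator_word N A)))"
    using A unfolding ballot_sets_def mem_Collect_eq prefix_condition_indicator_word
    by (simp add: N_def P_def count_indicator_word Int_absorb2)
  have "length (indicator_word N A) = N" "N = Suc n + r' + n * kk"
    by (simp_all add: indicator_word_def N_def tableau_size_def del: upt_Suc)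
  then obtain b w where v: "indicator_word N A = b # w"
    and length_w: "count_list w True + count_list w False = n + r' + n * kk"
    using count_list_True_plus_False by (cases "indicator_word N A") auto
  show ?thesis
  proof (cases b)
    case True
    have "(\<forall>t. P (take t (True # w)))
        \<longleftrightarrow> (\<forall>t. count_list (take t w) False \<le> r' + count_list (take t w) True * kk)"
      by (subst all_take_Cons_iff) (simp add: P_def)
    then show ?thesis
      using True v length_w by (auto simp: mem ballot_words_def simp flip: N_def)
  next
    case False
    \<comment> \<open>1 \<notin> A already violates the condition at t = 1\<close>
    have "\<not> P (take 1 (False # w))"
      by (simp add: P_def)
    then have "\<not> (\<forall>t. P (take t (indicator_word N A)))"
      using False v by metis
    then show ?thesis
      using False v mem by (auto simp flip: N_def)
  qed
qed

lemma card_ballot_sets: "card (ballot_sets kk r' n) = card (ballot_words kk n r')"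
proof -
  let ?N = "tableau_size kk r' n"
  have "bij_betw (indicator_word ?N) {A \<in> Pow {1..?N}. A \<in> ballot_sets kk r' n}
      {w \<in> {w. length w = ?N}. w \<in> Cons True ` ballot_words kk n r'}"
    by (rule bij_betw_Collect[OF bij_betw_indicator_word]) (simp add: in_ballot_sets_iff)
  moreover have "{A \<in> Pow {1..?N}. A \<in> ballot_sets kk r' n} = ballot_sets kk r' n"
    by (auto simp: ballot_sets_def)
  moreover have "{w \<in> {w. length w = ?N}. w \<in> Cons True ` ballot_words kk n r'}
      = Cons True ` ballot_words kk n r'"
  proof -
    have "length (True # w) = ?N" if "w \<in> ballot_words kk n r'" for w
      using count_list_True_plus_False[of w] that by (simp add: ballot_words_def tableau_size_def)
    then show ?thesis by auto
  qed
  ultimately show ?thesis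
    by (simp add: bij_betw_same_card card_image)
qed

section \<open>Cutting a sorted set into consecutive blocks\<close>

lemma card_less_nth_sorted:
  fixes xs :: "'a::linorder list"
  assumes "sorted_wrt (<) xs" "m < length xs"
  shows "card {y \<in> set xs. y < xs ! m} = m"
proof -
  have "{y \<in> set xs. y < xs ! m} = set (take m xs)"
  proof
    show "set (take m xs) \<subseteq> {y \<in> set xs. y < xs ! m}"
      using assms sorted_wrt_nth_less[OF assms(1)] set_take_subset[of m xs]
      by (auto simp: in_set_conv_nth)
    show "{y \<in> set xs. y < xs ! m} \<subseteq> set (take m xs)"
    proof
      fix y
      assume "y \<in> {y \<in> set xs. y < xs ! m}"
      then obtain i where i: "i < length xs" "y = xs ! i" "xs ! i < xs ! m"
        by (auto simp: in_set_conv_nth)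
      have "\<not> m < i"
        using sorted_wrt_nth_less[OF assms(1), of m i] i by auto
      moreover have "i \<noteq> m"
        using i(3) by auto
      ultimately have "i < m"
        by linarith
      then show "y \<in> set (take m xs)"
        using i by (auto simp: in_set_conv_nth)
    qed
  qed
  moreover have "distinct (take m xs)"
    using assms(1) strict_sorted_iff by (metis distinct_take)
  ultimately show ?thesis
    using assms(2) by (simp add: distinct_card)
qed

definition sorted_block :: "'a::linorder set \<Rightarrow> (nat \<Rightarrow> nat) \<Rightarrow> nat \<Rightarrow> 'a set" where
  "sorted_block C s j = (\<lambda>i. sorted_list_of_set C ! i) ` {s j..<s (Suc j)}"

lemma mem_sorted_block_iff:
  assumes "finite C" "s (Suc j) \<le> card C"
  shows "x \<in> sorted_block C s j \<longleftrightarrow>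
    x \<in> C \<and> s j \<le> card {z \<in> C. z < x} \<and> card {z \<in> C. z < x} < s (Suc j)"
proof -
  let ?xs = "sorted_list_of_set C"
  have rank: "card {z \<in> C. z < ?xs ! p} = p" if "p < card C" for p
    using card_less_nth_sorted[OF strict_sorted_list_of_set, of p C] that assms(1) by simp
  have C: "x \<in> C \<longleftrightarrow> (\<exists>p < card C. x = ?xs ! p)"
    using assms(1) by (metis in_set_conv_nth length_sorted_list_of_set set_sorted_list_of_set)
  show ?thesis
  proof
    assume "x \<in> sorted_block C s j"
    then obtain p where p: "s j \<le> p" "p < s (Suc j)" "x = ?xs ! p"
      by (auto simp: sorted_block_def)
    then have "p < card C"
      using assms(2) by simp
    then have "x \<in> C" "card {z \<in> C. z < x} = p"
      using C rank[of p] p(3) by auto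
    then show "x \<in> C \<and> s j \<le> card {z \<in> C. z < x} \<and> card {z \<in> C. z < x} < s (Suc j)"
      using p by simp
  next
    assume *: "x \<in> C \<and> s j \<le> card {z \<in> C. z < x} \<and> card {z \<in> C. z < x} < s (Suc j)"
    then obtain p where "p < card C" "x = ?xs ! p"
      using C by blast
    then show "x \<in> sorted_block C s j"
      using * rank[of p] by (auto simp: sorted_block_def)
  qed
qed

lemma sorted_block_subset:
  assumes "finite C" "s (Suc j) \<le> card C"
  shows "sorted_block C s j \<subseteq> C"
  using mem_sorted_block_iff[of C s j] assms by blast

lemma card_sorted_block:
  assumes "finite C" "s (Suc j) \<le> card C"
  shows "card (sorted_block C s j) = s (Suc j) - s j"
proof -
  have "inj_on (\<lambda>i. sorted_list_of_set C ! i) {s j..<s (Suc j)}"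
    using assms by (intro inj_on_nth) auto
  then show ?thesis
    by (simp add: sorted_block_def card_image)
qed

lemma sorted_block_less:
  assumes "finite C" "mono s" "i < j" "s (Suc j) \<le> card C"
    and x: "x \<in> sorted_block C s i" and y: "y \<in> sorted_block C s j"
  shows "x < y"
proof (rule ccontr)
  assume "\<not> x < y"
  have "s (Suc i) \<le> s j" "s (Suc i) \<le> card C"
    using assms(2-4) monoD[of s "Suc i" "Suc j"] by (auto intro: monoD)
  then have "card {z \<in> C. z < x} < card {z \<in> C. z < y}"
    using x y mem_sorted_block_iff[OF assms(1)] assms(4) by fastforce
  moreover have "{z \<in> C. z < y} \<subseteq> {z \<in> C. z < x}"
    using \<open>\<not> x < y\<close> by auto
  ultimately show False
    using card_mono[of "{z \<in> C. z < x}" "{z \<in> C. z < y}"] assms(1) by simp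
qed

lemma ex_segment_containing:
  fixes s :: "nat \<Rightarrow> 'a::linorder"
  assumes "s 0 \<le> p" "p < s m"
  shows "\<exists>j < m. s j \<le> p \<and> p < s (Suc j)"
  using assms(2)
proof (induction m)
  case (Suc m)
  show ?case
  proof (cases "p < s m")
    case True
    then show ?thesis using Suc.IH less_SucI by blast
  next
    case False
    then show ?thesis using Suc.prems by (intro exI[of _ m]) (simp add: not_less)
  qed
qed (use assms(1) in simp)

lemma Union_sorted_blocks:
  assumes "finite C" "mono s" "s 0 = 0" "s m = card C"
  shows "(\<Union>j<m. sorted_block C s j) = C"
proof
  show "(\<Union>j<m. sorted_block C s j) \<subseteq> C"
  proof (intro UN_least)
    fix j
    assume "j \<in> {..<m}"
    then have "s (Suc j) \<le> card C"
      using assms(2,4) monoD[of s "Suc j" m] by simp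
    then show "sorted_block C s j \<subseteq> C"
      using sorted_block_subset[OF assms(1)] by blast
  qed
  show "C \<subseteq> (\<Union>j<m. sorted_block C s j)"
  proof
    fix y
    assume "y \<in> C"
    then obtain p where p: "p < card C" "y = sorted_list_of_set C ! p"
      using assms(1) by (metis in_set_conv_nth length_sorted_list_of_set set_sorted_list_of_set)
    then obtain j where "j < m" "s j \<le> p" "p < s (Suc j)"
      using ex_segment_containing[of s p m] assms(3,4) by auto
    then have "y \<in> sorted_block C s j"
      using p by (auto simp: sorted_block_def)
    then show "y \<in> (\<Union>j<m. sorted_block C s j)"
      using \<open>j < m\<close> by blast
  qed
qed

lemma card_UN_ordered_blocks:
  fixes B :: "nat \<Rightarrow> 'a::linorder set"
  assumes fin: "\<And>j. j < m \<Longrightarrow> finite (B j)"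
    and less: "\<And>i j x y. i < j \<Longrightarrow> j < m \<Longrightarrow> x \<in> B i \<Longrightarrow> y \<in> B j \<Longrightarrow> x < y"
    and "l \<le> m"
  shows "card (\<Union>i<l. B i) = (\<Sum>i<l. card (B i))"
proof (rule card_UN_disjoint)
  have "B i \<inter> B i' = {}" if "i < i'" "i' < m" for i i'
    using less[OF that] by fastforce
  then show "\<forall>i\<in>{..<l}. \<forall>i'\<in>{..<l}. i \<noteq> i' \<longrightarrow> B i \<inter> B i' = {}"
    using \<open>l \<le> m\<close> by (metis Int_commute lessThan_iff nat_neq_iff order_less_le_trans)
qed (use fin \<open>l \<le> m\<close> in auto)

lemma card_less_mem_ordered_blocks:
  fixes B :: "nat \<Rightarrow> 'a::linorder set"
  assumes fin: "\<And>j. j < m \<Longrightarrow> finite (B j)"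
    and less: "\<And>i j x y. i < j \<Longrightarrow> j < m \<Longrightarrow> x \<in> B i \<Longrightarrow> y \<in> B j \<Longrightarrow> x < y"
    and "j < m" and y: "y \<in> B j"
  shows "card (\<Union>i<j. B i) \<le> card {z \<in> (\<Union>i<m. B i). z < y}"
    and "card {z \<in> (\<Union>i<m. B i). z < y} < card (\<Union>i<j. B i) + card (B j)"
proof -
  let ?C = "\<Union>i<m. B i"
  have "(\<Union>i<j. B i) \<subseteq> {z \<in> ?C. z < y}"
    using less y \<open>j < m\<close> by fastforce
  then show "card (\<Union>i<j. B i) \<le> card {z \<in> ?C. z < y}"
    using fin by (intro card_mono) auto
  have "{z \<in> ?C. z < y} \<subseteq> (\<Union>i<j. B i) \<union> (B j - {y})"
  proof
    fix z
    assume "z \<in> {z \<in> ?C. z < y}"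
    then obtain i where i: "i < m" "z \<in> B i" "z < y"
      by blast
    have "\<not> j < i"
      using less[of j i y z] i y by (meson order.asym)
    then show "z \<in> (\<Union>i<j. B i) \<union> (B j - {y})"
      using i by (cases "i < j") auto
  qed
  then have "card {z \<in> ?C. z < y} \<le> card ((\<Union>i<j. B i) \<union> (B j - {y}))"
    using fin \<open>j < m\<close> by (intro card_mono) auto
  also have "\<dots> \<le> card (\<Union>i<j. B i) + (card (B j) - 1)"
    using card_Un_le[of "\<Union>i<j. B i" "B j - {y}"] fin y \<open>j < m\<close> by simp
  moreover have "card (B j) > 0"
    using fin[OF \<open>j < m\<close>] y by (auto simp: card_gt_0_iff)
  ultimately show "card {z \<in> ?C. z < y} < card (\<Union>i<j. B i) + card (B j)"
    by linarith
qed

lemma sorted_blocks_unique: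
  fixes B :: "nat \<Rightarrow> 'a::linorder set"
  assumes fin: "\<And>j. j < m \<Longrightarrow> finite (B j)"
    and less: "\<And>i j x y. i < j \<Longrightarrow> j < m \<Longrightarrow> x \<in> B i \<Longrightarrow> y \<in> B j \<Longrightarrow> x < y"
    and s: "\<And>j. j \<le> m \<Longrightarrow> s j = (\<Sum>i<j. card (B i))"
    and "j < m"
  shows "B j = sorted_block (\<Union>i<m. B i) s j"
proof -
  let ?C = "\<Union>i<m. B i"
  have fin_C: "finite ?C"
    using fin by blast
  have card_prefix: "card (\<Union>i<l. B i) = s l" if "l \<le> m" for l
    using card_UN_ordered_blocks[where B = B and m = m, OF fin less that] s[OF that] by simp
  have s_Suc: "s (Suc j) = s j + card (B j)"
    using s[of j] s[of "Suc j"] \<open>j < m\<close> by simp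
  have s_le: "s (Suc j) \<le> card ?C"
    using card_prefix[of "Suc j"] card_mono[OF fin_C, of "\<Union>i<Suc j. B i"] \<open>j < m\<close> by force
  have "B j \<subseteq> sorted_block ?C s j"
  proof
    fix y
    assume y: "y \<in> B j"
    have "s j \<le> card {z \<in> ?C. z < y}" "card {z \<in> ?C. z < y} < s (Suc j)"
      using card_less_mem_ordered_blocks[where B = B and m = m, OF fin less \<open>j < m\<close> y]
        card_prefix[of j] s_Suc \<open>j < m\<close>
      by simp_all
    moreover have "y \<in> ?C"
      using y \<open>j < m\<close> by blast
    ultimately show "y \<in> sorted_block ?C s j"
      using mem_sorted_block_iff[of ?C s j y] fin_C s_le by blast
  qed
  moreover have "card (sorted_block ?C s j) = card (B j)"
    using card_sorted_block[of ?C s j] fin_C s_le s_Suc by simp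
  moreover have "finite (sorted_block ?C s j)"
    by (simp add: sorted_block_def)
  ultimately show ?thesis
    by (simp add: card_seteq)
qed

(* The row condition of a set-valued tableau only compares adjacent cells and is vacuous across an
   empty cell; hence the nonemptiness hypothesis. *)
lemma chain_adjacent_less:
  fixes B :: "nat \<Rightarrow> 'a::order set"
  assumes adjacent: "\<And>l. i \<le> l \<Longrightarrow> l < j \<Longrightarrow> \<forall>x\<in>B l. \<forall>y\<in>B (Suc l). x < y"
    and nonempty: "\<And>l. i < l \<Longrightarrow> l < j \<Longrightarrow> B l \<noteq> {}"
    and "i < j" "x \<in> B i" "y \<in> B j"
  shows "x < y"
  using assms(3-5) adjacent nonempty
proof (induction j arbitrary: y)
  case (Suc j)
  show ?case
  proof (cases "i = j")
    case True
    then show ?thesis using Suc.prems by auto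
  next
    case False
    then obtain z where "z \<in> B j"
      using Suc.prems by fastforce
    then have "x < z"
      using Suc False by auto
    also have "z < y"
      using Suc.prems(1,3) Suc.prems(4)[of j] \<open>z \<in> B j\<close> by simp
    finally show ?thesis .
  qed
qed simp

section \<open>Set-valued tableaux of shape (n+1, n+1)\<close>

lemma SVT_outside:
  assumes "S \<in> SVT lam rho" "c \<notin> cells lam"
  shows "S c = {}"
proof -
  have "\<forall>c. c \<notin> cells lam \<longrightarrow> S c = {}"
    using assms(1) unfolding SVT_def mem_Collect_eq by (rule conjunct1)
  then show ?thesis
    using assms(2) by blast
qed

lemma finite_SVT_cell: "S \<in> SVT lam rho \<Longrightarrow> c \<in> cells lam \<Longrightarrow> finite (S c)"
  by (simp add: SVT_def)

lemma card_SVT_cell: "S \<in> SVT lam rho \<Longrightarrow> c \<in> cells lam \<Longrightarrow> card (S c) = rho c"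
  by (simp add: SVT_def)

lemma SVT_disjoint:
  "S \<in> SVT lam rho \<Longrightarrow> c \<in> cells lam \<Longrightarrow> d \<in> cells lam \<Longrightarrow> c \<noteq> d \<Longrightarrow> S c \<inter> S d = {}"
  by (simp add: SVT_def)

lemma SVT_Union:
  "S \<in> SVT lam rho \<Longrightarrow> (\<Union>c\<in>cells lam. S c) = {1 .. (\<Sum>c\<in>cells lam. rho c)}"
  by (simp add: SVT_def)

lemma SVT_row_less:
  "S \<in> SVT lam rho \<Longrightarrow> (i, j) \<in> cells lam \<Longrightarrow> (i, j + 1) \<in> cells lam \<Longrightarrow>
    a \<in> S (i, j) \<Longrightarrow> b \<in> S (i, j + 1) \<Longrightarrow> a < b"
  unfolding SVT_def by blast

lemma SVT_col_less:
  "S \<in> SVT lam rho \<Longrightarrow> (i, j) \<in> cells lam \<Longrightarrow> (i + 1, j) \<in> cells lam \<Longrightarrow>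
    a \<in> S (i, j) \<Longrightarrow> b \<in> S (i + 1, j) \<Longrightarrow> a < b"
  unfolding SVT_def by blast

lemma cells_two_rows: "cells [m, m] = {1, 2} \<times> {1..m}"
  by (auto simp: cells_def nth_Cons' split: if_splits)

lemma mem_cells_two_rows:
  "c \<in> cells [m, m] \<longleftrightarrow> (\<exists>i l. c = (i, Suc l) \<and> i \<in> {1, 2} \<and> l < m)"
proof
  assume "c \<in> cells [m, m]"
  then obtain i j where "c = (i, j)" "i \<in> {1, 2}" "1 \<le> j" "j \<le> m"
    by (auto simp: cells_two_rows)
  then show "\<exists>i l. c = (i, Suc l) \<and> i \<in> {1, 2} \<and> l < m"
    by (cases j) auto
qed (auto simp: cells_two_rows)

lemma Union_cells_two_rows:
  "(\<Union>c\<in>cells [m, m]. S c) = (\<Union>l<m. S (1, Suc l)) \<union> (\<Union>l<m. S (2, Suc l))"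
proof -
  have "{1..m} = Suc ` {..<m}"
    by (simp add: atLeast1_atMost_eq_remove0 lessThan_Suc_atMost[symmetric] image_Suc_lessThan)
  then show ?thesis
    by (auto simp: cells_two_rows)
qed

lemma row2_prefix_size_eq_sum:
  "row2_prefix_size kk r' u = (\<Sum>l<u. rho_kr (Suc kk) (Suc r') (2, Suc l))"
proof (induction u)
  case (Suc u)
  then show ?case by (cases u) (simp_all add: rho_kr_def)
qed simp

lemma sum_rho_kr:
  "(\<Sum>c\<in>cells [Suc n, Suc n]. rho_kr (Suc kk) (Suc r') c) = tableau_size kk r' n"
proof -
  let ?rho = "rho_kr (Suc kk) (Suc r')"
  have "(\<Sum>c\<in>cells [Suc n, Suc n]. ?rho c) = (\<Sum>i\<in>{1, 2}. \<Sum>j\<in>{1..Suc n}. ?rho (i, j))"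
    unfolding cells_two_rows by (simp only: sum.cartesian_product split_def prod.collapse)
  also have "\<dots> = Suc n + (\<Sum>j\<in>{1..Suc n}. ?rho (2, j))"
    by (simp add: rho_kr_def)
  also have "(\<Sum>j\<in>{1..Suc n}. ?rho (2, j)) = (\<Sum>l<Suc n. ?rho (2, Suc l))"
    by (rule sum.reindex_bij_witness[of _ Suc "\<lambda>j. j - 1"]) auto
  finally show ?thesis
    by (simp add: row2_prefix_size_eq_sum[symmetric] tableau_size_def)
qed

definition first_row :: "nat \<Rightarrow> (nat \<times> nat \<Rightarrow> nat set) \<Rightarrow> nat set" where
  "first_row n S = (\<Union>l<Suc n. S (1, Suc l))"

(* Cells are numbered from 1, blocks from 0: cell (i, j) receives block j - 1 of its row. *)
definition tableau_of_first_row ::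
  "nat \<Rightarrow> nat \<Rightarrow> nat \<Rightarrow> nat set \<Rightarrow> nat \<times> nat \<Rightarrow> nat set" where
  "tableau_of_first_row kk r' n A c =
     (if c \<notin> cells [Suc n, Suc n] then {}
      else if fst c = 1 then sorted_block A id (snd c - 1)
      else sorted_block ({1..tableau_size kk r' n} - A) (row2_prefix_size kk r') (snd c - 1))"

context
  fixes kk r' n :: nat
begin

abbreviation "\<rho> \<equiv> rho_kr (Suc kk) (Suc r')"
abbreviation "two_row_shape \<equiv> [Suc n, Suc n]"

lemma SVT_row_increasing:
  assumes S: "S \<in> SVT two_row_shape \<rho>" and "i \<in> {1, 2}" "1 \<le> j" "j < j'" "j' \<le> Suc n"
    and "x \<in> S (i, j)" "y \<in> S (i, j')"
  shows "x < y"
proof (rule chain_adjacent_less[of j j' "\<lambda>l. S (i, l)"])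
  show "\<forall>a\<in>S (i, l). \<forall>b\<in>S (i, Suc l). a < b" if "j \<le> l" "l < j'" for l
    using SVT_row_less[OF S, of i l] that assms(2-5) by (auto simp: cells_two_rows)
  have "card (S (i, j')) \<noteq> 0"
    using assms(7) finite_SVT_cell[OF S, of "(i, j')"] assms(2-5) by (auto simp: cells_two_rows)
  then show "S (i, l) \<noteq> {}" if "j < l" "l < j'" for l
    using card_SVT_cell[OF S, of "(i, l)"] card_SVT_cell[OF S, of "(i, j')"] that assms(2-5)
    by (auto simp: cells_two_rows rho_kr_def)
qed (use assms in auto)

lemma SVT_Union_eq:
  "S \<in> SVT two_row_shape \<rho> \<Longrightarrow> (\<Union>c\<in>cells two_row_shape. S c) = {1..tableau_size kk r' n}"
  using SVT_Union[of S two_row_shape \<rho>] by (simp add: sum_rho_kr)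

lemma card_SVT_first_row_prefix:
  assumes S: "S \<in> SVT two_row_shape \<rho>" and "m \<le> Suc n"
  shows "card (\<Union>l<m. S (1, Suc l)) = m"
proof -
  have "card (\<Union>l<m. S (1, Suc l)) = (\<Sum>l<m. card (S (1, Suc l)))"
    using assms finite_SVT_cell[OF S] SVT_disjoint[OF S]
    by (intro card_UN_disjoint) (auto simp: cells_two_rows)
  also have "\<dots> = m"
    using assms card_SVT_cell[OF S] by (simp add: cells_two_rows rho_kr_def)
  finally show ?thesis .
qed

lemma SVT_first_row_less_second_row:
  assumes S: "S \<in> SVT two_row_shape \<rho>" and "i \<le> l" "l < Suc n"
    and x: "x \<in> S (1, Suc i)" and y: "y \<in> S (2, Suc l)"
  shows "x < y"
proof -
  obtain a where a: "S (1, Suc l) = {a}"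
    using card_SVT_cell[OF S, of "(1, Suc l)"] assms(3)
    by (auto simp: cells_two_rows rho_kr_def card_1_singleton_iff)
  have "x \<le> a"
    using SVT_row_increasing[OF S, of 1 "Suc i" "Suc l" x a] assms(2,3) x a by (cases "i = l") auto
  also have "a < y"
    using SVT_col_less[OF S, of 1 "Suc l" a y] a assms(3) y by (simp add: cells_two_rows numeral_2_eq_2)
  finally show ?thesis .
qed

lemma SVT_second_row_eq:
  assumes S: "S \<in> SVT two_row_shape \<rho>"
  shows "(\<Union>l<Suc n. S (2, Suc l)) = {1..tableau_size kk r' n} - first_row n S"
proof -
  have "S (1, Suc i) \<inter> S (2, Suc l) = {}" if "i < Suc n" "l < Suc n" for i l
    using SVT_disjoint[OF S, of "(1, Suc i)" "(2, Suc l)"] that by (simp add: cells_two_rows)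
  then have "first_row n S \<inter> (\<Union>l<Suc n. S (2, Suc l)) = {}"
    by (auto simp: first_row_def)
  then show ?thesis
    using SVT_Union_eq[OF S] by (auto simp: Union_cells_two_rows first_row_def)
qed

lemma SVT_initial_segment_diff_first_row:
  assumes S: "S \<in> SVT two_row_shape \<rho>" and "t \<le> tableau_size kk r' n"
  shows "{1..t} - first_row n S \<subseteq> (\<Union>l<card (first_row n S \<inter> {1..t}). S (2, Suc l))"
proof
  fix y
  assume y: "y \<in> {1..t} - first_row n S"
  then have "y \<in> (\<Union>l<Suc n. S (2, Suc l))"
    using SVT_second_row_eq[OF S] \<open>t \<le> tableau_size kk r' n\<close> by auto
  then obtain l where l: "l < Suc n" "y \<in> S (2, Suc l)"
    by blast
  have "(\<Union>i<Suc l. S (1, Suc i)) \<subseteq> first_row n S \<inter> {1..t}"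
  proof
    fix x
    assume "x \<in> (\<Union>i<Suc l. S (1, Suc i))"
    then obtain i where i: "i \<le> l" "x \<in> S (1, Suc i)"
      by (auto simp: less_Suc_eq_le)
    then have "x < y"
      using SVT_first_row_less_second_row[OF S _ l(1) _ l(2)] by blast
    moreover have "x \<in> first_row n S"
      using i l(1) by (auto simp: first_row_def)
    moreover have "x \<ge> 1"
      using SVT_Union_eq[OF S] \<open>x \<in> first_row n S\<close> by (force simp: Union_cells_two_rows first_row_def)
    ultimately show "x \<in> first_row n S \<inter> {1..t}"
      using y by auto
  qed
  then have "card (\<Union>i<Suc l. S (1, Suc i)) \<le> card (first_row n S \<inter> {1..t})"
    by (intro card_mono) auto
  then have "Suc l \<le> card (first_row n S \<inter> {1..t})"
    using card_SVT_first_row_prefix[OF S, of "Suc l"] l(1) by simp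
  then show "y \<in> (\<Union>l<card (first_row n S \<inter> {1..t}). S (2, Suc l))"
    using l(2) by auto
qed

lemma first_row_in_ballot_sets:
  assumes S: "S \<in> SVT two_row_shape \<rho>"
  shows "first_row n S \<in> ballot_sets kk r' n"
proof -
  let ?A = "first_row n S" and ?N = "tableau_size kk r' n"
  have card_A: "card ?A = Suc n"
    using card_SVT_first_row_prefix[OF S] by (simp add: first_row_def)
  have "card ({1..t} - ?A) \<le> row2_prefix_size kk r' (card (?A \<inter> {1..t}))" if "t \<le> ?N" for t
  proof -
    let ?u = "card (?A \<inter> {1..t})"
    have u_le: "?u \<le> Suc n"
      using card_A card_mono[of ?A "?A \<inter> {1..t}"] card.infinite by fastforce
    have "card ({1..t} - ?A) \<le> card (\<Union>l<?u. S (2, Suc l))"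
      using SVT_initial_segment_diff_first_row[OF S that] finite_SVT_cell[OF S] u_le
      by (intro card_mono) (auto simp: cells_two_rows)
    also have "\<dots> \<le> (\<Sum>l<?u. card (S (2, Suc l)))"
      by (rule card_UN_le) simp
    also have "\<dots> = row2_prefix_size kk r' ?u"
      unfolding row2_prefix_size_eq_sum using card_SVT_cell[OF S] u_le
      by (intro sum.cong) (auto simp: cells_two_rows)
    finally show ?thesis .
  qed
  moreover have "?A \<subseteq> {1..?N}"
    using SVT_Union_eq[OF S] by (auto simp: Union_cells_two_rows first_row_def)
  ultimately show ?thesis
    using card_A by (auto simp: ballot_sets_def)
qed

lemma SVT_row_eq_sorted_block:
  assumes S: "S \<in> SVT two_row_shape \<rho>" and i: "i \<in> {1, 2}" and "l < Suc n"
  shows "S (i, Suc l) = sorted_block (\<Union>j<Suc n. S (i, Suc j)) (\<lambda>j. \<Sum>j'<j. \<rho> (i, Suc j')) l"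
proof (rule sorted_blocks_unique[where B = "\<lambda>j. S (i, Suc j)"])
  show "finite (S (i, Suc j))" if "j < Suc n" for j
    using finite_SVT_cell[OF S] that i by (simp add: cells_two_rows)
  show "x < y" if "j < j'" "j' < Suc n" "x \<in> S (i, Suc j)" "y \<in> S (i, Suc j')" for j j' x y
    using SVT_row_increasing[OF S i, of "Suc j" "Suc j'" x y] that by simp
  show "(\<Sum>j'<j. \<rho> (i, Suc j')) = (\<Sum>j'<j. card (S (i, Suc j')))" if "j \<le> Suc n" for j
    using card_SVT_cell[OF S] that i by (intro sum.cong) (auto simp: cells_two_rows)
qed (rule \<open>l < Suc n\<close>)

lemma SVT_eq_tableau_of_first_row:
  assumes S: "S \<in> SVT two_row_shape \<rho>"
  shows "tableau_of_first_row kk r' n (first_row n S) = S"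
proof
  fix c
  show "tableau_of_first_row kk r' n (first_row n S) c = S c"
  proof (cases "c \<in> cells two_row_shape")
    case False
    then show ?thesis
      using SVT_outside[OF S] by (simp add: tableau_of_first_row_def)
  next
    case True
    then obtain i l where c: "c = (i, Suc l)" "i \<in> {1, 2}" "l < Suc n"
      by (auto simp: mem_cells_two_rows)
    have "(\<lambda>j. \<Sum>j'<j. \<rho> (1, Suc j')) = id" "(\<lambda>j. \<Sum>j'<j. \<rho> (2, Suc j')) = row2_prefix_size kk r'"
      by (simp_all add: fun_eq_iff rho_kr_def row2_prefix_size_eq_sum)
    then show ?thesis
      using SVT_row_eq_sorted_block[OF S c(2,3)] SVT_second_row_eq[OF S] c
      by (auto simp: tableau_of_first_row_def first_row_def cells_two_rows)
  qed
qed

lemma ballot_set_subset: "A \<in> ballot_sets kk r' n \<Longrightarrow> A \<subseteq> {1..tableau_size kk r' n}"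
  and card_ballot_set: "A \<in> ballot_sets kk r' n \<Longrightarrow> card A = Suc n"
  and finite_ballot_set: "A \<in> ballot_sets kk r' n \<Longrightarrow> finite A"
  by (auto simp: ballot_sets_def intro: finite_subset)

lemma card_ballot_set_complement:
  assumes "A \<in> ballot_sets kk r' n"
  shows "card ({1..tableau_size kk r' n} - A) = row2_prefix_size kk r' (Suc n)"
  using card_Diff_subset[OF finite_ballot_set ballot_set_subset, OF assms assms] card_ballot_set[OF assms]
  by (simp add: tableau_size_def)

lemma ballot_sets_column_less:
  assumes A: "A \<in> ballot_sets kk r' n" and "l < Suc n"
    and a: "a \<in> sorted_block A id l"
    and b: "b \<in> sorted_block ({1..tableau_size kk r' n} - A) (row2_prefix_size kk r') l"
  shows "a < b"
proof (rule ccontr)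
  let ?N = "tableau_size kk r' n"
  let ?C = "{1..?N} - A"
  assume "\<not> a < b"
  have A_sub: "A \<subseteq> {1..?N}" and card_A: "card A = Suc n" and fin_A: "finite A"
    using ballot_set_subset[OF A] card_ballot_set[OF A] finite_ballot_set[OF A] .
  have "row2_prefix_size kk r' (Suc l) \<le> card ?C"
    using card_ballot_set_complement[OF A] monoD[OF mono_row2_prefix_size, of "Suc l" "Suc n"] \<open>l < Suc n\<close>
    by (simp del: row2_prefix_size.simps)
  then have b_rank: "b \<in> ?C" "row2_prefix_size kk r' l \<le> card {z \<in> ?C. z < b}"
    using b mem_sorted_block_iff[of ?C "row2_prefix_size kk r'" l b] by auto
  have a_rank: "a \<in> A" "card {z \<in> A. z < a} = l"
    using a mem_sorted_block_iff[of A id l a] fin_A card_A \<open>l < Suc n\<close> by auto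
  then have "b < a"
    using \<open>\<not> a < b\<close> b_rank(1) by (cases "a = b") auto
  \<comment> \<open>then {1..a-1} contains l elements of A and more than row2_prefix_size l others\<close>
  define t where "t = a - 1"
  have "t \<le> ?N"
    using a_rank(1) A_sub by (force simp: t_def)
  have "A \<inter> {1..t} = {z \<in> A. z < a}"
    using A_sub a_rank(1) by (auto simp: t_def)
  have "insert b {z \<in> ?C. z < b} \<subseteq> {1..t} - A"
    using b_rank(1) \<open>b < a\<close> by (auto simp: t_def)
  then have "card (insert b {z \<in> ?C. z < b}) \<le> card ({1..t} - A)"
    by (intro card_mono) auto
  also have "\<dots> \<le> row2_prefix_size kk r' l"
    using A \<open>t \<le> ?N\<close> \<open>A \<inter> {1..t} = {z \<in> A. z < a}\<close> a_rank(2) by (auto simp: ballot_sets_def)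
  finally show False
    using b_rank(2) by simp
qed

lemma tableau_of_first_row_first:
  "l < Suc n \<Longrightarrow> tableau_of_first_row kk r' n A (1, Suc l) = sorted_block A id l"
  by (simp add: tableau_of_first_row_def cells_two_rows)

lemma tableau_of_first_row_second:
  "l < Suc n \<Longrightarrow> tableau_of_first_row kk r' n A (2, Suc l)
    = sorted_block ({1..tableau_size kk r' n} - A) (row2_prefix_size kk r') l"
  by (simp add: tableau_of_first_row_def cells_two_rows)

lemma tableau_of_first_row_subset:
  assumes A: "A \<in> ballot_sets kk r' n" and "i \<in> {1, 2}" "l < Suc n"
  shows "tableau_of_first_row kk r' n A (i, Suc l)
    \<subseteq> (if i = 1 then A else {1..tableau_size kk r' n} - A)"
  using assms tableau_of_first_row_first tableau_of_first_row_second
    sorted_block_subset[OF finite_ballot_set[OF A], of id l] card_ballot_set[OF A]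
    sorted_block_subset[of "{1..tableau_size kk r' n} - A" "row2_prefix_size kk r'" l]
    card_ballot_set_complement[OF A] monoD[OF mono_row2_prefix_size, of "Suc l" "Suc n"]
  by auto

lemma card_tableau_of_first_row:
  assumes A: "A \<in> ballot_sets kk r' n" and "i \<in> {1, 2}" "l < Suc n"
  shows "card (tableau_of_first_row kk r' n A (i, Suc l)) = \<rho> (i, Suc l)"
proof (cases "i = 1")
  case True
  then show ?thesis
    using assms tableau_of_first_row_first card_sorted_block[OF finite_ballot_set[OF A], of id l]
      card_ballot_set[OF A] by (simp add: rho_kr_def)
next
  case False
  then show ?thesis
    using assms tableau_of_first_row_second
      card_sorted_block[of "{1..tableau_size kk r' n} - A" "row2_prefix_size kk r'" l]
      card_ballot_set_complement[OF A] monoD[OF mono_row2_prefix_size, of "Suc l" "Suc n"]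
    by (simp add: row2_prefix_size_eq_sum)
qed

lemma tableau_of_first_row_row_less:
  assumes A: "A \<in> ballot_sets kk r' n" and "i \<in> {1, 2}" "l < l'" "l' < Suc n"
    and "x \<in> tableau_of_first_row kk r' n A (i, Suc l)" "y \<in> tableau_of_first_row kk r' n A (i, Suc l')"
  shows "x < y"
proof (cases "i = 1")
  case True
  have "mono (id :: nat \<Rightarrow> nat)"
    by (simp add: mono_def)
  then show ?thesis
    using True assms tableau_of_first_row_first sorted_block_less[OF finite_ballot_set[OF A]]
      card_ballot_set[OF A] by simp
next
  case False
  let ?C = "{1..tableau_size kk r' n} - A"
  have "row2_prefix_size kk r' (Suc l') \<le> card ?C"
    using card_ballot_set_complement[OF A] monoD[OF mono_row2_prefix_size, of "Suc l'" "Suc n"] assms(4)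
    by (simp del: row2_prefix_size.simps)
  then show ?thesis
    using False assms tableau_of_first_row_second
      sorted_block_less[of ?C "row2_prefix_size kk r'" l l' x y] mono_row2_prefix_size by simp
qed

lemma first_row_tableau_of_first_row:
  assumes A: "A \<in> ballot_sets kk r' n"
  shows "first_row n (tableau_of_first_row kk r' n A) = A"
proof -
  have mono_id: "mono (id :: nat \<Rightarrow> nat)"
    by (simp add: mono_def)
  have "first_row n (tableau_of_first_row kk r' n A) = (\<Union>l<Suc n. sorted_block A id l)"
    unfolding first_row_def by (intro SUP_cong) (simp_all add: tableau_of_first_row_def cells_two_rows)
  then show ?thesis
    using Union_sorted_blocks[OF finite_ballot_set[OF A] mono_id, of "Suc n"] card_ballot_set[OF A]
    by simp
qed

lemma Union_tableau_of_first_row: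
  assumes A: "A \<in> ballot_sets kk r' n"
  shows "(\<Union>c\<in>cells two_row_shape. tableau_of_first_row kk r' n A c) = {1..tableau_size kk r' n}"
proof -
  have "(\<Union>l<Suc n. tableau_of_first_row kk r' n A (2, Suc l)) = {1..tableau_size kk r' n} - A"
    using Union_sorted_blocks[of "{1..tableau_size kk r' n} - A" "row2_prefix_size kk r'" "Suc n"]
      mono_row2_prefix_size card_ballot_set_complement[OF A] by (simp add: tableau_of_first_row_second)
  then show ?thesis
    using ballot_set_subset[OF A] first_row_tableau_of_first_row[OF A]
    by (auto simp: Union_cells_two_rows first_row_def)
qed

lemma tableau_of_first_row_disjoint:
  assumes A: "A \<in> ballot_sets kk r' n"
    and "c \<in> cells two_row_shape" "d \<in> cells two_row_shape" "c \<noteq> d"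
  shows "tableau_of_first_row kk r' n A c \<inter> tableau_of_first_row kk r' n A d = {}"
proof -
  let ?T = "tableau_of_first_row kk r' n A"
  obtain i l where c: "c = (i, Suc l)" "i \<in> {1, 2}" "l < Suc n"
    using assms(2) by (auto simp: mem_cells_two_rows)
  obtain i' l' where d: "d = (i', Suc l')" "i' \<in> {1, 2}" "l' < Suc n"
    using assms(3) by (auto simp: mem_cells_two_rows)
  show ?thesis
  proof (cases "i = i'")
    case True
    then have "l < l' \<or> l' < l"
      using c d \<open>c \<noteq> d\<close> by auto
    then have False if "x \<in> ?T (i, Suc l)" "x \<in> ?T (i, Suc l')" for x
      using tableau_of_first_row_row_less[OF A c(2), of l l' x x]
        tableau_of_first_row_row_less[OF A c(2), of l' l x x] that c d by auto
    then show ?thesis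
      using c d True by blast
  next
    case False
    then have "(if i = 1 then A else {1..tableau_size kk r' n} - A)
        \<inter> (if i' = 1 then A else {1..tableau_size kk r' n} - A) = {}"
      using c(2) d(2) by auto
    then show ?thesis
      using tableau_of_first_row_subset[OF A c(2,3)] tableau_of_first_row_subset[OF A d(2,3)] c(1) d(1)
      by blast
  qed
qed

lemma tableau_of_first_row_in_SVT:
  assumes A: "A \<in> ballot_sets kk r' n"
  shows "tableau_of_first_row kk r' n A \<in> SVT two_row_shape \<rho>"
proof -
  let ?T = "tableau_of_first_row kk r' n A"
  have card: "finite (?T c) \<and> card (?T c) = \<rho> c" if "c \<in> cells two_row_shape" for c
  proof
    show "finite (?T c)"
      by (simp add: tableau_of_first_row_def sorted_block_def)
    show "card (?T c) = \<rho> c"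
      using that card_tableau_of_first_row[OF A] by (auto simp: mem_cells_two_rows)
  qed
  have row: "a < b" if "(i, j) \<in> cells two_row_shape" "(i, j + 1) \<in> cells two_row_shape"
    "a \<in> ?T (i, j)" "b \<in> ?T (i, j + 1)" for i j a b
  proof -
    have "i \<in> {1, 2}" "1 \<le> j" "j + 1 \<le> Suc n"
      using that(1,2) by (auto simp: cells_two_rows)
    then show ?thesis
      using tableau_of_first_row_row_less[OF A, of i "j - 1" j a b] that(3,4) by (cases j) auto
  qed
  have column: "a < b" if "(i, j) \<in> cells two_row_shape" "(i + 1, j) \<in> cells two_row_shape"
    "a \<in> ?T (i, j)" "b \<in> ?T (i + 1, j)" for i j a b
  proof -
    have "i = 1" "1 \<le> j" "j \<le> Suc n"
      using that(1,2) by (auto simp: cells_two_rows)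
    then show ?thesis
      using ballot_sets_column_less[OF A, of "j - 1" a b] that(3,4)
        tableau_of_first_row_first[of "j - 1"] tableau_of_first_row_second[of "j - 1"]
      by (cases j) (auto simp: numeral_2_eq_2)
  qed
  have outside: "\<forall>c. c \<notin> cells two_row_shape \<longrightarrow> ?T c = {}"
    by (simp add: tableau_of_first_row_def)
  show ?thesis
    unfolding SVT_def mem_Collect_eq sum_rho_kr
    using outside card tableau_of_first_row_disjoint[OF A] Union_tableau_of_first_row[OF A] row column
    by (intro conjI) blast+
qed

end

lemma card_SVT_rho_kr:
  "card (SVT [Suc n, Suc n] (rho_kr (Suc kk) (Suc r'))) = card (ballot_sets kk r' n)"
proof -
  have "bij_betw (first_row n) (SVT [Suc n, Suc n] (rho_kr (Suc kk) (Suc r'))) (ballot_sets kk r' n)"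
    by (rule bij_betw_byWitness[where f' = "tableau_of_first_row kk r' n"])
      (auto simp: SVT_eq_tableau_of_first_row first_row_in_ballot_sets tableau_of_first_row_in_SVT
        first_row_tableau_of_first_row)
  then show ?thesis
    by (rule bij_betw_same_card)
qed

theorem theorem3:
  fixes k r n :: nat
  assumes "k \<ge> 1" and "r \<ge> 1"
  shows "raney k r n = real (card (SVT [n + 1, n + 1] (rho_kr k r)))"
proof -
  obtain kk where k: "k = Suc kk"
    using assms(1) by (cases k) auto
  obtain r' where r: "r = Suc r'"
    using assms(2) by (cases r) auto
  have "raney k r n = real_of_int (raney_int k n r)"
    using raney_eq_raney_int assms by simp
  also have "raney_int k n r = int (card (ballot_words kk n r'))"
    using card_ballot_words k r by simp
  also have "card (ballot_words kk n r') = card (SVT [n + 1, n + 1] (rho_kr k r))"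
    using card_ballot_sets card_SVT_rho_kr k r by simp
  finally show ?thesis
    by simp
qed

end
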